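(* Let the words $C_n$, $D_n$ over $\{1,2\}$ be defined by $C_0=D_0=\varepsilon$ (the empty word), $C_{k+1}=C_k\,1\,D_k$, $D_{k+1}=C_k\,2\,D_k$ for $k\ge 0$ (so $C_1=1$, $D_1=2$). Let $\tau=\tau_1\tau_2\cdots\tau_\ell$ ($\ell\ge 1$) be a pattern without internal dashes over $\{1,2\}$, and for a word $w$ let $\mathrm{occ}_\tau(w)$ denote the number of occurrences of $\tau$ in $w$, i.e. the number of factors (blocks of consecutive letters) $w_iw_{i+1}\cdots w_{i+\ell-1}$ of $w$ whose reduced form is $\tau$. Write $c_n^{\tau}=\mathrm{occ}_\tau(C_n)$ and $d_n^{\tau}=\mathrm{occ}_\tau(D_n)$. Let $k=\lceil \log_2\ell\rceil$, $a=\mathrm{occ}_\tau(\mathcal K_\ell(D_k1C_k))$ and $b=\mathrm{occ}_\tau(\mathcal K_\ell(D_k2C_k))$. Then for all $n>k+1$, $$c_n^{\tau}=\bigl(a+b+c_{k+1}^{\tau}+d_{k+1}^{\tau}\bigr)\cdot 2^{n-k-2}-b,\qquad d_n^{\tau}=\bigl(a+b+c_{k+1}^{\tau}+d_{k+1}^{\tau}\bigr)\cdot 2^{n-k-2}-a.$$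
   Context: Reduced form of a word over $\{1,2\}$: if the word contains both letters it is the word itself; if it consists of a single repeated letter $x^\ell$ its reduced form is $1^\ell$. So a pattern $\tau$ is a word over $\{1,2\}$ that is either $1^\ell$ or contains both letters; an occurrence of $1^\ell$ is any constant factor of length $\ell$, while an occurrence of a pattern containing both letters is a factor equal to it. Kernel: if $W=A\,x\,B$ where $A,B$ are words of the same length and $x$ is a letter, the kernel of order $j$, $\mathcal K_j(W)$, is the word consisting of the $j-1$ rightmost letters of $A$, followed by $x$, followed by the $j-1$ leftmost letters of $B$; if $|A|<j-1$ then $\mathcal K_j(W)$ is the empty word. Example: $\mathcal K_3(111211221)=12112$. Note $|C_k|=|D_k|=2^k-1$, so $D_k1C_k$ and $D_k2C_k$ have this form with $A=D_k$, $B=C_k$. *)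

theory Defs
  imports Complex_Main
begin

fun CD :: "nat \<Rightarrow> nat list \<times> nat list" where
  "CD 0 = ([], [])"
| "CD (Suc k) = (let (c, d) = CD k in (c @ [1] @ d, c @ [2] @ d))"

definition C :: "nat \<Rightarrow> nat list" where "C k = fst (CD k)"
definition D :: "nat \<Rightarrow> nat list" where "D k = snd (CD k)"

definition reduced :: "nat list \<Rightarrow> nat list" where
  "reduced u = (if 1 \<in> set u \<and> 2 \<in> set u then u else replicate (length u) 1)"

definition is_pattern :: "nat list \<Rightarrow> bool" where
  "is_pattern t \<longleftrightarrow> t \<noteq> [] \<and> set t \<subseteq> {1, 2} \<and>
     (t = replicate (length t) 1 \<or> (1 \<in> set t \<and> 2 \<in> set t))"

definition occ :: "nat list \<Rightarrow> nat list \<Rightarrow> nat" where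
  "occ t w = card {i. i + length t \<le> length w \<and> reduced (take (length t) (drop i w)) = t}"

text \<open>Kernel of order j of W = A x B with |A| = |B| (here given by A, x, B).\<close>
definition kernel :: "nat \<Rightarrow> nat list \<Rightarrow> nat \<Rightarrow> nat list \<Rightarrow> nat list" where
  "kernel j A x B = (if length A < j - 1 then []
      else drop (length A - (j - 1)) A @ [x] @ take (j - 1) B)"

end

(* Every occurrence of a pattern of length l in a word X x Y (with |X|, |Y| >= l - 1) lies
   inside X, inside Y, or covers the middle letter x, and the last kind are exactly the
   occurrences in the kernel of order l. Since C (m+1) = C m 1 D m and D (m+1) = C m 2 D m,
   and for m > k the word C m ends with D k while D m starts with C k, both of length
   2^k - 1 >= l - 1, the middle kernel is that of D k x C k whatever m is. Hence
   c(m+1) = c m + d m + a and d(m+1) = c m + d m + b for m > k, and solving this linear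
   recurrence from m = k + 1 gives the closed form. *)

theory Submission
  imports Defs
begin

definition occurrences :: "nat list \<Rightarrow> nat list \<Rightarrow> nat set" where
  "occurrences t w = {i. i + length t \<le> length w \<and> reduced (take (length t) (drop i w)) = t}"

lemma occ_eq_card_occurrences: "occ t w = card (occurrences t w)"
  unfolding occ_def occurrences_def ..

lemma finite_occurrences: "finite (occurrences t w)"
  unfolding occurrences_def by (rule finite_subset[of _ "{..length w}"]) auto

lemma occurrences_take_drop:
  assumes "lo + m \<le> length w"
  shows "(+) lo ` occurrences t (take m (drop lo w))
       = {i \<in> occurrences t w. lo \<le> i \<and> i + length t \<le> lo + m}"
proof -
  have window: "take (length t) (drop i (take m (drop lo w))) = take (length t) (drop (lo + i) w)"
    if "i + length t \<le> m" for i
    using that by (simp add: drop_take add.commute)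
  show ?thesis
  proof (intro equalityI subsetI)
    fix j assume "j \<in> (+) lo ` occurrences t (take m (drop lo w))"
    then show "j \<in> {i \<in> occurrences t w. lo \<le> i \<and> i + length t \<le> lo + m}"
      using assms window by (auto simp: occurrences_def)
  next
    fix j assume j: "j \<in> {i \<in> occurrences t w. lo \<le> i \<and> i + length t \<le> lo + m}"
    then have "j - lo \<in> occurrences t (take m (drop lo w))"
      using assms window[of "j - lo"] by (auto simp: occurrences_def)
    then show "j \<in> (+) lo ` occurrences t (take m (drop lo w))"
      using j by (intro image_eqI[of _ _ "j - lo"]) auto
  qed
qed

lemma occ_take_drop:
  assumes "lo + m \<le> length w"
  shows "occ t (take m (drop lo w)) = card {i \<in> occurrences t w. lo \<le> i \<and> i + length t \<le> lo + m}"
  unfolding occ_eq_card_occurrences occurrences_take_drop[OF assms, symmetric]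
  by (simp add: card_image)

lemma occ_append_letter:
  assumes "length t \<ge> 1" "length t - 1 \<le> length X" "length t - 1 \<le> length Y"
  shows "occ t (X @ [x] @ Y) = occ t X + occ t Y + occ t (kernel (length t) X x Y)"
proof -
  define L p W where "L = length t" and "p = length X" and "W = X @ [x] @ Y"
  have X: "take p (drop 0 W) = X" and Y: "take (length Y) (drop (p + 1) W) = Y"
    by (simp_all add: p_def W_def)
  have K: "take (2 * L - 1) (drop (p + 1 - L) W) = kernel L X x Y"
    using assms by (cases L) (auto simp: kernel_def L_def p_def W_def take_append)
  let ?left = "{i \<in> occurrences t W. i + L \<le> p}"
  let ?mid = "{i \<in> occurrences t W. p + 1 - L \<le> i \<and> i + L \<le> p + 1 - L + (2 * L - 1)}"
  let ?right = "{i \<in> occurrences t W. p + 1 \<le> i \<and> i + L \<le> p + 1 + length Y}"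
  have "occurrences t W = ?left \<union> ?mid \<union> ?right"
    using assms by (auto simp: occurrences_def L_def p_def W_def)
  moreover have "card (?left \<union> ?mid \<union> ?right) = card ?left + card ?mid + card ?right"
    using assms finite_occurrences[of t W] unfolding L_def p_def
    by (subst card_Un_disjoint; auto)+
  ultimately have "occ t W = card ?left + card ?mid + card ?right"
    unfolding occ_eq_card_occurrences by simp
  moreover have "occ t X = card ?left"
    using occ_take_drop[of 0 p W t, unfolded X, folded L_def] by (simp add: p_def W_def)
  moreover have "occ t Y = card ?right"
    by (rule occ_take_drop[of "p + 1" "length Y" W t, unfolded Y, folded L_def]) (simp add: p_def W_def)
  moreover have "occ t (kernel L X x Y) = card ?mid"
    by (rule occ_take_drop[of "p + 1 - L" "2 * L - 1" W t, folded L_def, unfolded K])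
      (use assms in \<open>simp add: p_def W_def L_def\<close>)
  ultimately show ?thesis unfolding L_def W_def by simp
qed

lemma kernel_append_outer:
  assumes "length A = length B" "j - 1 \<le> length A"
  shows "kernel j (X @ A) x (B @ Y) = kernel j A x B"
  using assms unfolding kernel_def by auto

lemma C_Suc: "C (Suc m) = C m @ [1] @ D m"
  and D_Suc: "D (Suc m) = C m @ [2] @ D m"
  by (simp_all add: C_def D_def split: prod.splits)

lemma length_C: "length (C m) = 2 ^ m - 1"
  and length_D: "length (D m) = 2 ^ m - 1"
proof (induction m)
  case 0 then show "length (C 0) = 2 ^ 0 - 1" "length (D 0) = 2 ^ 0 - 1"
    by (simp_all add: C_def D_def)
next
  case (Suc m)
  have "(1::nat) \<le> 2 ^ m" by simp
  then show "length (C (Suc m)) = 2 ^ Suc m - 1" "length (D (Suc m)) = 2 ^ Suc m - 1"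
    using Suc by (simp_all add: C_Suc D_Suc)
qed

lemma C_prefix_C: "k \<le> m \<Longrightarrow> \<exists>Y. C m = C k @ Y"
proof (induction m rule: dec_induct)
  case (step m) then show ?case by (auto simp: C_Suc)
qed simp

lemma D_suffix_D: "k \<le> m \<Longrightarrow> \<exists>X. D m = X @ D k"
proof (induction m rule: dec_induct)
  case (step m) then show ?case by (auto simp: D_Suc)
qed simp

lemma D_suffix_C: "k < m \<Longrightarrow> \<exists>X. C m = X @ D k"
  using D_suffix_D[of k "m - 1"] C_Suc[of "m - 1"] by (cases m) auto

lemma C_prefix_D: "k < m \<Longrightarrow> \<exists>Y. D m = C k @ Y"
  using C_prefix_C[of k "m - 1"] D_Suc[of "m - 1"] by (cases m) auto

lemma occ_C_letter_D:
  assumes "length t \<ge> 1" "length t \<le> 2 ^ k" "k < m"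
  shows "occ t (C m @ [x] @ D m) = occ t (C m) + occ t (D m) + occ t (kernel (length t) (D k) x (C k))"
proof -
  have "length t \<le> 2 ^ m"
    using assms(2,3) by (meson le_trans less_imp_le one_le_numeral power_increasing)
  then have lengths: "length t - 1 \<le> length (D k)" "length (D k) = length (C k)"
      "length t - 1 \<le> length (C m)" "length t - 1 \<le> length (D m)"
    using assms(2) by (simp_all add: length_C length_D diff_le_mono)
  obtain X Y where "C m = X @ D k" "D m = C k @ Y"
    using D_suffix_C C_prefix_D assms(3) by blast
  then have "kernel (length t) (C m) x (D m) = kernel (length t) (D k) x (C k)"
    using lengths by (simp add: kernel_append_outer)
  with occ_append_letter[OF assms(1) lengths(3,4)] show ?thesis by simp
qed

lemma doubling_recurrence_closed_form:
  fixes c d :: "nat \<Rightarrow> 'a::comm_ring_1"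
  assumes "\<And>m. m \<ge> m\<^sub>0 \<Longrightarrow> c (Suc m) = c m + d m + \<alpha> \<and> d (Suc m) = c m + d m + \<beta>"
  shows "c (Suc (m\<^sub>0 + j)) = (\<alpha> + \<beta> + c m\<^sub>0 + d m\<^sub>0) * 2 ^ j - \<beta>
       \<and> d (Suc (m\<^sub>0 + j)) = (\<alpha> + \<beta> + c m\<^sub>0 + d m\<^sub>0) * 2 ^ j - \<alpha>"
proof (induction j)
  case 0 then show ?case using assms[of m\<^sub>0] by (simp add: algebra_simps)
next
  case (Suc j)
  let ?S = "\<alpha> + \<beta> + c m\<^sub>0 + d m\<^sub>0"
  have "c (Suc (m\<^sub>0 + j)) + d (Suc (m\<^sub>0 + j)) = (?S * 2 ^ j - \<beta>) + (?S * 2 ^ j - \<alpha>)"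
    using Suc.IH by simp
  also have "\<dots> = ?S * 2 ^ Suc j - \<alpha> - \<beta>" by (simp add: algebra_simps)
  finally have "c (Suc (m\<^sub>0 + j)) + d (Suc (m\<^sub>0 + j)) = ?S * 2 ^ Suc j - \<alpha> - \<beta>" .
  then show ?case using assms[of "Suc (m\<^sub>0 + j)"] by (simp add: algebra_simps)
qed

lemma le_2_power_ceiling_log:
  assumes "l \<ge> 1" shows "l \<le> 2 ^ nat \<lceil>log 2 (real l)\<rceil>"
proof -
  have "real l = 2 powr (log 2 (real l))" using assms by simp
  also have "\<dots> \<le> 2 powr (real (nat \<lceil>log 2 (real l)\<rceil>))"
    by (rule powr_mono) linarith+
  also have "\<dots> = 2 ^ nat \<lceil>log 2 (real l)\<rceil>" by (simp add: powr_realpow)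
  finally show ?thesis by (metis of_nat_le_iff of_nat_numeral of_nat_power)
qed

theorem theorem4:
  fixes t :: "nat list" and n :: nat
  assumes "is_pattern t"
  defines "l \<equiv> length t"
  defines "k \<equiv> nat \<lceil>log 2 (real l)\<rceil>"
  defines "a \<equiv> occ t (kernel l (D k) 1 (C k))"
  defines "b \<equiv> occ t (kernel l (D k) 2 (C k))"
  assumes "n > k + 1"
  shows "int (occ t (C n)) = (int a + int b + int (occ t (C (k+1))) + int (occ t (D (k+1)))) * 2 ^ (n - k - 2) - int b
       \<and> int (occ t (D n)) = (int a + int b + int (occ t (C (k+1))) + int (occ t (D (k+1)))) * 2 ^ (n - k - 2) - int a"
proof -
  have "l \<ge> 1" using assms(1) unfolding is_pattern_def l_def by (cases t) auto
  moreover have "l \<le> 2 ^ k" unfolding k_def by (rule le_2_power_ceiling_log[OF \<open>l \<ge> 1\<close>])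
  ultimately have recurrence: "int (occ t (C (Suc m))) = int (occ t (C m)) + int (occ t (D m)) + int a
      \<and> int (occ t (D (Suc m))) = int (occ t (C m)) + int (occ t (D m)) + int b" if "m \<ge> k + 1" for m
    using occ_C_letter_D[of t k m] that unfolding a_def b_def l_def by (simp add: C_Suc D_Suc)
  define j where "j = n - k - 2"
  have "Suc (k + 1 + j) = n" using assms(6) unfolding j_def by simp
  from doubling_recurrence_closed_form[where c = "\<lambda>m. int (occ t (C m))" and d = "\<lambda>m. int (occ t (D m))"
      and m\<^sub>0 = "k + 1" and j = j, OF recurrence, unfolded this]
  show ?thesis unfolding j_def .
qed

end
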